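(* Let $E/\mathbb{F}_q$, $r\ge2$, $\mathcal{G}$, $F=E^{\mathcal{G}}$, the places $Q_0,\dots,Q_s$, $P_{u,v}$, and the functions $z,\omega_0,\dots,\omega_{r-1}$ be as in the context, and let $1\le t\le s$. For $\mathbf a=(a_{i,j})$ let $$f_{\mathbf a}=\sum_{j=1}^{t}a_{0,j}z^{j-1}+\sum_{i=1}^{r-1}\Big(\sum_{j=1}^{t-1}a_{i,j}z^{j-1}\Big)\omega_i\in V_E .$$ Fix $u\in\{1,\dots,s\}$ and suppose that every $r\times r$ submatrix of $M_u$ is invertible and every $(r-1)\times(r-1)$ submatrix of the $(r+1)\times(r-1)$ matrix $M'_u=(\omega_i(P_{u,v}))_{1\le v\le r+1,\,1\le i\le r-1}$ is invertible. For $f_{\mathbf a}\in V_E$ consider the vector $$B_u(\mathbf a)=\Big(f_{\mathbf a}(P_{u,1}),\dots,f_{\mathbf a}(P_{u,r+1}),\ \sum_{j=1}^ta_{0,j}z(Q_u)^{j-1}\Big)\in\mathbb{F}_q^{r+2}.$$ Then for any two positions of $B_u(\mathbf a)$, the entries in these two positions are uniquely determined by the remaining $r$ entries; that is, if $B_u(\mathbf a)$ and $B_u(\mathbf b)$ agree in $r$ positions, they agree everywhere.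
   Context: $E/\mathbb{F}_q$ is an elliptic function field with full constant field $\mathbb{F}_q$; $\mathcal{G}\subseteq\mathrm{Aut}(E/\mathbb{F}_q)$ is a subgroup of order $r+1$ with fixed field $F=E^{\mathcal{G}}$ a rational function field; $Q_0,Q_1,\dots,Q_s$ are distinct rational places of $F$ splitting completely in $E/F$, and $P_{u,1},\dots,P_{u,r+1}$ are the places of $E$ over $Q_u$. $z\in F$ satisfies $F=\mathbb{F}_q(z)$ and $(z)_\infty=P_{0,1}+\cdots+P_{0,r+1}$ in $E$; $\omega_0=1$ and $\omega_1,\dots,\omega_{r-1}\in E$ satisfy $(\omega_i)_\infty=P_{0,1}+\cdots+P_{0,i+1}$ and $\omega_0,\dots,\omega_{r-1}$ are linearly independent over $F$. $M_u$ is the $(r+1)\times r$ matrix $(\omega_i(P_{u,v}))_{1\le v\le r+1,\,0\le i\le r-1}$. $V_E$ is the $\mathbb{F}_q$-space of all $f_{\mathbf a}$ as displayed, of dimension $rt-r+1$. *)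

theory Defs
  imports "Jordan_Normal_Form.DL_Submatrix" "Jordan_Normal_Form.Matrix"
begin

text \<open>Abstract model of the places P_{u,1},...,P_{u,r+1} of E over Q_u (u >= 1).
  Places are indexed 0..r (place v stands for P_{u,v+1}); exponents j-1 are shifted to j.\<close>

definition f_vec :: "('k \<Rightarrow> 'e::field) \<Rightarrow> 'e \<Rightarrow> (nat \<Rightarrow> 'e) \<Rightarrow> nat \<Rightarrow> nat \<Rightarrow> (nat \<Rightarrow> nat \<Rightarrow> 'k) \<Rightarrow> 'e" where
  "f_vec emb z \<omega> r t a =
     (\<Sum>j<t. emb (a 0 j) * z ^ j) +
     (\<Sum>i\<in>{1..r-1}. (\<Sum>j<t-1. emb (a i j) * z ^ j) * \<omega> i)"

definition M_mat :: "(nat \<Rightarrow> 'e \<Rightarrow> 'k) \<Rightarrow> (nat \<Rightarrow> 'e) \<Rightarrow> nat \<Rightarrow> 'k mat" where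
  "M_mat ev \<omega> r = mat (r+1) r (\<lambda>(v,i). ev v (\<omega> i))"

definition M'_mat :: "(nat \<Rightarrow> 'e \<Rightarrow> 'k) \<Rightarrow> (nat \<Rightarrow> 'e) \<Rightarrow> nat \<Rightarrow> 'k mat" where
  "M'_mat ev \<omega> r = mat (r+1) (r-1) (\<lambda>(v,i). ev v (\<omega> (i+1)))"

definition B_vec :: "(nat \<Rightarrow> 'e::field \<Rightarrow> 'k::field) \<Rightarrow> ('k \<Rightarrow> 'e) \<Rightarrow> 'e \<Rightarrow> 'k \<Rightarrow> (nat \<Rightarrow> 'e)
     \<Rightarrow> nat \<Rightarrow> nat \<Rightarrow> (nat \<Rightarrow> nat \<Rightarrow> 'k) \<Rightarrow> nat \<Rightarrow> 'k" where
  "B_vec ev emb z zQ \<omega> r t a k =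
     (if k \<le> r then ev k (f_vec emb z \<omega> r t a) else (\<Sum>j<t. a 0 j * zQ ^ j))"

end

theory Submission
  imports Defs
begin

text \<open>Write f_a = \<Sum>_i g_i(z) \<omega>_i and c_i = g_i(z(Q_u)). As z takes the value z(Q_u) at
  every place over Q_u, B_u(a) = (M_u c, c_0) depends linearly on c, so it suffices that c = 0
  whenever this vector vanishes in r positions. If these are all places, an r x r minor of M_u
  kills c. Otherwise the last position gives c_0 = 0, and since \<omega>_0 = 1 the remaining r - 1
  places give a system in c_1, ..., c_(r-1) whose matrix is an (r-1) x (r-1) minor of M'_u.\<close>

lemma pick_lessThan: "j < n \<Longrightarrow> pick {..<n} j = j"
  using pick_reduce_set[of j n UNIV] by (simp add: pick_UNIV lessThan_def)

lemma invertible_mat_mult_vec_eq_zero: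
  fixes A :: "'a::field mat"
  assumes "invertible_mat A" "A \<in> carrier_mat n n" "x \<in> carrier_vec n" "A *\<^sub>v x = 0\<^sub>v n"
  shows "x = 0\<^sub>v n"
proof -
  obtain B where AB: "A * B = 1\<^sub>m (dim_row A)" and BA: "B * A = 1\<^sub>m (dim_row B)"
    using assms(1) unfolding invertible_mat_def inverts_mat_def by blast
  have B: "B \<in> carrier_mat n n"
    using assms(2) arg_cong[OF AB, of dim_col] arg_cong[OF BA, of dim_col] by auto
  have "x = (B * A) *\<^sub>v x" using BA B assms(3) by simp
  also have "\<dots> = B *\<^sub>v (A *\<^sub>v x)" using B assms(2,3) by (rule assoc_mult_mat_vec)
  finally show ?thesis using assms(4) B by auto
qed

lemma submatrix_rows_invertible_imp_zero:
  fixes M :: "'a::field mat" and x :: "nat \<Rightarrow> 'a"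
  assumes M: "M \<in> carrier_mat N m"
    and I: "I \<subseteq> {..<N}" "card I = m"
    and inv: "invertible_mat (submatrix M I {..<m})"
    and vanish: "\<And>v. v \<in> I \<Longrightarrow> (\<Sum>j<m. M $$ (v,j) * x j) = 0"
  shows "j < m \<Longrightarrow> x j = 0"
proof -
  define A where "A = submatrix M I {..<m}"
  have "{i. i < dim_row M \<and> i \<in> I} = I" "{j. j < dim_col M \<and> j < m} = {..<m}"
    using I(1) M by auto
  then have rows: "card {i. i < dim_row M \<and> i \<in> I} = m"
    and cols: "card {j. j < dim_col M \<and> j < m} = m"
    using I(2) by simp_all
  have A: "A \<in> carrier_mat m m" unfolding A_def carrier_mat_def by (simp add: dim_submatrix rows cols)
  have entry: "A $$ (k, j) = M $$ (pick I k, j)" if "k < m" "j < m" for k j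
    using submatrix_index[of k M I j "{..<m}"] that by (simp add: A_def rows cols pick_lessThan)
  have "A *\<^sub>v vec m x = 0\<^sub>v m"
  proof (rule eq_vecI)
    fix k assume "k < dim_vec (0\<^sub>v m :: 'a vec)"
    then have k: "k < m" by simp
    have "pick I k \<in> I" using pick_in_set_le[of k I] k I(2) by simp
    then have "(\<Sum>j<m. A $$ (k, j) * x j) = 0" using vanish entry[OF k] by simp
    then show "(A *\<^sub>v vec m x) $ k = 0\<^sub>v m $ k"
      using A k by (simp add: scalar_prod_def atLeast0LessThan)
  qed (use A in simp)
  then have "vec m x = 0\<^sub>v m"
    using invertible_mat_mult_vec_eq_zero[OF _ A] inv unfolding A_def by simp
  then show "j < m \<Longrightarrow> x j = 0" by (metis index_vec index_zero_vec(1))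
qed

text \<open>Position k \<le> r is the place P_(u,k+1), with e k i = \<omega>_i(P_(u,k+1));
  position r + 1 reads off c 0.\<close>
definition ext_eval :: "(nat \<Rightarrow> nat \<Rightarrow> 'a::comm_ring) \<Rightarrow> nat \<Rightarrow> (nat \<Rightarrow> 'a) \<Rightarrow> nat \<Rightarrow> 'a" where
  "ext_eval e r c k = (if k \<le> r then \<Sum>i<r. c i * e k i else c 0)"

lemma ext_eval_diff:
  "ext_eval e r c k - ext_eval e r c' k = ext_eval e r (\<lambda>i. c i - c' i) k"
  by (simp add: ext_eval_def sum_subtractf left_diff_distrib)

lemma ext_eval_kernel:
  fixes e :: "nat \<Rightarrow> nat \<Rightarrow> 'a::field"
  assumes M_inv: "\<And>I J. I \<subseteq> {..<r+1} \<Longrightarrow> J \<subseteq> {..<r} \<Longrightarrow> card I = r \<Longrightarrow> card J = r \<Longrightarrow>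
              invertible_mat (submatrix (mat (r+1) r (\<lambda>(v,i). e v i)) I J)"
    and M'_inv: "\<And>I J. I \<subseteq> {..<r+1} \<Longrightarrow> J \<subseteq> {..<r-1} \<Longrightarrow> card I = r - 1 \<Longrightarrow> card J = r - 1 \<Longrightarrow>
              invertible_mat (submatrix (mat (r+1) (r-1) (\<lambda>(v,i). e v (i+1))) I J)"
    and K: "K \<subseteq> {..<r+2}" "card K = r"
    and vanish: "\<And>k. k \<in> K \<Longrightarrow> ext_eval e r d k = 0"
  shows "i < r \<Longrightarrow> d i = 0"
proof (cases "r+1 \<in> K")
  case False
  then have KI: "K \<subseteq> {..<r+1}" using K(1) by (auto simp: less_Suc_eq)
  show "i < r \<Longrightarrow> d i = 0"
  proof (rule submatrix_rows_invertible_imp_zero[where x = d, OF _ KI K(2) M_inv[OF KI _ K(2)]])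
    fix v assume "v \<in> K"
    then show "(\<Sum>j<r. mat (r+1) r (\<lambda>(v,i). e v i) $$ (v,j) * d j) = 0"
      using vanish[of v] KI by (auto simp: ext_eval_def mult.commute)
  qed auto
next
  case True
  have "finite K" using K(1) finite_subset by blast
  then have d0: "d 0 = 0" and r: "r \<ge> 1"
    using vanish[OF True] K True by (auto simp: ext_eval_def Suc_le_eq card_gt_0_iff)
  define I where "I = K - {r+1}"
  have I: "I \<subseteq> {..<r+1}" "card I = r - 1"
    using K True by (auto simp: I_def less_Suc_eq)
  have "j < r - 1 \<Longrightarrow> d (j+1) = 0" for j
  proof (rule submatrix_rows_invertible_imp_zero[where x = "\<lambda>j. d (j+1)", OF _ I M'_inv[OF I(1) _ I(2)]])
    fix v assume v: "v \<in> I"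
    have "(\<Sum>j<r-1. d (Suc j) * e v (Suc j)) = (\<Sum>j<Suc (r-1). d j * e v j)"
      unfolding sum.lessThan_Suc_shift using d0 by simp
    also have "\<dots> = 0" using vanish[of v] v I(1) r by (auto simp: I_def ext_eval_def)
    finally show "(\<Sum>j<r-1. mat (r+1) (r-1) (\<lambda>(v,i). e v (i+1)) $$ (v,j) * d (j+1)) = 0"
      using v I(1) by (auto simp: mult.commute)
  qed auto
  then show "i < r \<Longrightarrow> d i = 0" using d0 by (cases i) auto
qed

lemma ext_eval_determined:
  fixes e :: "nat \<Rightarrow> nat \<Rightarrow> 'a::field"
  assumes M_inv: "\<And>I J. I \<subseteq> {..<r+1} \<Longrightarrow> J \<subseteq> {..<r} \<Longrightarrow> card I = r \<Longrightarrow> card J = r \<Longrightarrow>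
              invertible_mat (submatrix (mat (r+1) r (\<lambda>(v,i). e v i)) I J)"
    and M'_inv: "\<And>I J. I \<subseteq> {..<r+1} \<Longrightarrow> J \<subseteq> {..<r-1} \<Longrightarrow> card I = r - 1 \<Longrightarrow> card J = r - 1 \<Longrightarrow>
              invertible_mat (submatrix (mat (r+1) (r-1) (\<lambda>(v,i). e v (i+1))) I J)"
    and K: "K \<subseteq> {..<r+2}" "card K = r" and r: "r \<ge> 1"
    and agree: "\<And>k. k \<in> K \<Longrightarrow> ext_eval e r c k = ext_eval e r c' k"
  shows "ext_eval e r c k = ext_eval e r c' k"
proof -
  have "ext_eval e r (\<lambda>i. c i - c' i) k = 0" if "k \<in> K" for k
    using agree[OF that] by (simp add: ext_eval_diff[symmetric])
  then have "i < r \<Longrightarrow> c i - c' i = 0" for i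
    using ext_eval_kernel[OF M_inv M'_inv K, of "\<lambda>i. c i - c' i"] by blast
  then have "ext_eval e r (\<lambda>i. c i - c' i) k = 0"
    using r by (simp add: ext_eval_def)
  then show ?thesis by (simp add: ext_eval_diff[symmetric])
qed

text \<open>R plays the role of the valuation ring of the place.\<close>
locale place_evaluation =
  fixes emb :: "'k::field \<Rightarrow> 'e::field" and R :: "'e set" and ev :: "'e \<Rightarrow> 'k"
  assumes emb_add: "emb (c + d) = emb c + emb d"
    and emb_one: "emb 1 = 1"
    and add_closed: "x \<in> R \<Longrightarrow> y \<in> R \<Longrightarrow> x + y \<in> R"
    and mult_closed: "x \<in> R \<Longrightarrow> y \<in> R \<Longrightarrow> x * y \<in> R"
    and emb_closed: "emb c \<in> R"
    and ev_add: "x \<in> R \<Longrightarrow> y \<in> R \<Longrightarrow> ev (x + y) = ev x + ev y"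
    and ev_mult: "x \<in> R \<Longrightarrow> y \<in> R \<Longrightarrow> ev (x * y) = ev x * ev y"
    and ev_emb: "ev (emb c) = c"
begin

lemma emb_zero: "emb 0 = 0"
  using emb_add[of 0 0] by (metis add.right_neutral add_left_cancel)

lemma zero_closed: "0 \<in> R" and ev_zero: "ev 0 = 0"
  using emb_closed[of 0] ev_emb[of 0] by (simp_all add: emb_zero)

lemma one_closed: "1 \<in> R" and ev_one: "ev 1 = 1"
  using emb_closed[of 1] ev_emb[of 1] by (simp_all add: emb_one)

lemma sum_closed: "(\<And>x. x \<in> A \<Longrightarrow> g x \<in> R) \<Longrightarrow> sum g A \<in> R"
  by (induction A rule: infinite_finite_induct) (auto intro: zero_closed add_closed)

lemma ev_sum: "(\<And>x. x \<in> A \<Longrightarrow> g x \<in> R) \<Longrightarrow> ev (sum g A) = (\<Sum>x\<in>A. ev (g x))"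
proof (induction A rule: infinite_finite_induct)
  case (insert x F)
  then have "g x \<in> R" "sum g F \<in> R" by (auto intro: sum_closed)
  then show ?case using insert by (simp add: ev_add)
qed (simp_all add: ev_zero)

lemma power_closed: "z \<in> R \<Longrightarrow> z ^ n \<in> R"
  by (induction n) (simp_all add: one_closed mult_closed)

lemma ev_power: "z \<in> R \<Longrightarrow> ev (z ^ n) = ev z ^ n"
  by (induction n) (simp_all add: ev_one ev_mult power_closed)

lemma poly_closed: "z \<in> R \<Longrightarrow> (\<Sum>j<n. emb (p j) * z ^ j) \<in> R"
  by (intro sum_closed mult_closed emb_closed power_closed)

lemma ev_poly: "z \<in> R \<Longrightarrow> ev (\<Sum>j<n. emb (p j) * z ^ j) = (\<Sum>j<n. p j * ev z ^ j)"
  by (simp add: ev_sum mult_closed emb_closed power_closed ev_mult ev_emb ev_power)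

end

definition coeff_value :: "'k::field \<Rightarrow> nat \<Rightarrow> (nat \<Rightarrow> nat \<Rightarrow> 'k) \<Rightarrow> nat \<Rightarrow> 'k" where
  "coeff_value x t a i = (if i = 0 then \<Sum>j<t. a 0 j * x ^ j else \<Sum>j<t-1. a i j * x ^ j)"

lemma (in place_evaluation) ev_f_vec:
  assumes z: "z \<in> R" and \<omega>: "\<And>i. i < r \<Longrightarrow> \<omega> i \<in> R" and \<omega>0: "\<omega> 0 = 1" and r: "r \<ge> 1"
  shows "ev (f_vec emb z \<omega> r t a) = (\<Sum>i<r. coeff_value (ev z) t a i * ev (\<omega> i))"
proof -
  have \<omega>': "\<omega> i \<in> R" if "i \<in> {1..r-1}" for i using that \<omega> r by auto
  have summand: "(\<Sum>j<t-1. emb (a i j) * z ^ j) * \<omega> i \<in> R"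
      "ev ((\<Sum>j<t-1. emb (a i j) * z ^ j) * \<omega> i) = coeff_value (ev z) t a i * ev (\<omega> i)"
    if "i \<in> {1..r-1}" for i
    using that z \<omega>'[OF that] by (simp_all add: mult_closed poly_closed ev_mult ev_poly coeff_value_def)
  have "(\<Sum>i\<in>{1..r-1}. (\<Sum>j<t-1. emb (a i j) * z ^ j) * \<omega> i) \<in> R"
    using summand(1) by (rule sum_closed)
  moreover have "ev (\<Sum>i\<in>{1..r-1}. (\<Sum>j<t-1. emb (a i j) * z ^ j) * \<omega> i) =
      (\<Sum>i\<in>{1..r-1}. coeff_value (ev z) t a i * ev (\<omega> i))"
    using ev_sum[OF summand(1)] sum.cong[OF refl summand(2)] by (rule trans)
  ultimately have "ev (f_vec emb z \<omega> r t a) =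
      coeff_value (ev z) t a 0 + (\<Sum>i\<in>{1..r-1}. coeff_value (ev z) t a i * ev (\<omega> i))"
    unfolding f_vec_def using z by (simp add: ev_add poly_closed ev_poly coeff_value_def)
  also have "\<dots> = (\<Sum>i<r. coeff_value (ev z) t a i * ev (\<omega> i))"
  proof -
    have "{..<r} = insert 0 {1..r-1}" using r by auto
    then show ?thesis using \<omega>0 ev_one by simp
  qed
  finally show ?thesis .
qed

lemma B_vec_eq_ext_eval:
  assumes places: "\<And>v. v \<le> r \<Longrightarrow> place_evaluation emb (Ov v) (ev v)"
    and z: "\<And>v. v \<le> r \<Longrightarrow> z \<in> Ov v" "\<And>v. v \<le> r \<Longrightarrow> ev v z = zQ"
    and \<omega>: "\<And>v i. v \<le> r \<Longrightarrow> i < r \<Longrightarrow> \<omega> i \<in> Ov v" and \<omega>0: "\<omega> 0 = 1"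
    and r: "r \<ge> 1"
  shows "B_vec ev emb z zQ \<omega> r t a k = ext_eval (\<lambda>v i. ev v (\<omega> i)) r (coeff_value zQ t a) k"
proof (cases "k \<le> r")
  case True
  show ?thesis
    using place_evaluation.ev_f_vec[where \<omega> = \<omega> and r = r,
        OF places[OF True] z(1)[OF True] \<omega>[OF True] \<omega>0 r] z(2)[OF True] True
    by (simp add: B_vec_def ext_eval_def)
qed (simp add: B_vec_def ext_eval_def coeff_value_def)

theorem mainTheorem8:
  fixes emb :: "'k::{finite,field} \<Rightarrow> 'e::field"
    and ev :: "nat \<Rightarrow> 'e \<Rightarrow> 'k"
    and Ov :: "nat \<Rightarrow> 'e set"
    and z :: 'e and zQ :: 'k and \<omega> :: "nat \<Rightarrow> 'e"
    and r t s u :: nat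
  assumes r2: "r \<ge> 2"
    and t: "1 \<le> t" "t \<le> s"
    and u: "1 \<le> u" "u \<le> s"
    and emb_hom: "\<And>x y. emb (x + y) = emb x + emb y" "\<And>x y. emb (x * y) = emb x * emb y"
                 "emb 1 = 1"
    and O_ring: "\<And>v x y. v \<le> r \<Longrightarrow> x \<in> Ov v \<Longrightarrow> y \<in> Ov v \<Longrightarrow> x + y \<in> Ov v"
                "\<And>v x y. v \<le> r \<Longrightarrow> x \<in> Ov v \<Longrightarrow> y \<in> Ov v \<Longrightarrow> x * y \<in> Ov v"
    and O_contains: "\<And>v c. v \<le> r \<Longrightarrow> emb c \<in> Ov v" "\<And>v. v \<le> r \<Longrightarrow> z \<in> Ov v"
                    "\<And>v i. v \<le> r \<Longrightarrow> i < r \<Longrightarrow> \<omega> i \<in> Ov v"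
    and ev_hom: "\<And>v x y. v \<le> r \<Longrightarrow> x \<in> Ov v \<Longrightarrow> y \<in> Ov v \<Longrightarrow> ev v (x + y) = ev v x + ev v y"
                "\<And>v x y. v \<le> r \<Longrightarrow> x \<in> Ov v \<Longrightarrow> y \<in> Ov v \<Longrightarrow> ev v (x * y) = ev v x * ev v y"
                "\<And>v c. v \<le> r \<Longrightarrow> ev v (emb c) = c"
    and z_over_Q: "\<And>v. v \<le> r \<Longrightarrow> ev v z = zQ"
    and omega0: "\<omega> 0 = 1"
    and M_inv: "\<And>I J. I \<subseteq> {..<r+1} \<Longrightarrow> J \<subseteq> {..<r} \<Longrightarrow> card I = r \<Longrightarrow> card J = r \<Longrightarrow>
                  invertible_mat (submatrix (M_mat ev \<omega> r) I J)"
    and M'_inv: "\<And>I J. I \<subseteq> {..<r+1} \<Longrightarrow> J \<subseteq> {..<r-1} \<Longrightarrow> card I = r - 1 \<Longrightarrow> card J = r - 1 \<Longrightarrow>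
                  invertible_mat (submatrix (M'_mat ev \<omega> r) I J)"
  shows "\<forall>a b K. K \<subseteq> {..<r+2} \<longrightarrow> card K = r \<longrightarrow>
           (\<forall>k\<in>K. B_vec ev emb z zQ \<omega> r t a k = B_vec ev emb z zQ \<omega> r t b k) \<longrightarrow>
           (\<forall>k<r+2. B_vec ev emb z zQ \<omega> r t a k = B_vec ev emb z zQ \<omega> r t b k)"
proof (intro allI impI)
  fix a b :: "nat \<Rightarrow> nat \<Rightarrow> 'k" and K :: "nat set" and k
  assume K: "K \<subseteq> {..<r+2}" "card K = r"
    and agree: "\<forall>k\<in>K. B_vec ev emb z zQ \<omega> r t a k = B_vec ev emb z zQ \<omega> r t b k"
  have r: "r \<ge> 1" using r2 by simp
  have places: "place_evaluation emb (Ov v) (ev v)" if "v \<le> r" for v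
    by unfold_locales (use that emb_hom O_ring O_contains ev_hom in auto)
  have B: "B_vec ev emb z zQ \<omega> r t c k = ext_eval (\<lambda>v i. ev v (\<omega> i)) r (coeff_value zQ t c) k"
    for c k by (rule B_vec_eq_ext_eval[where Ov = Ov]) (use places O_contains z_over_Q omega0 r in auto)
  show "B_vec ev emb z zQ \<omega> r t a k = B_vec ev emb z zQ \<omega> r t b k"
    unfolding B
    by (rule ext_eval_determined[OF M_inv[unfolded M_mat_def] M'_inv[unfolded M'_mat_def] K r])
      (use agree in \<open>auto simp: B\<close>)
qed

end
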